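(* Every passivization-covariant operation $\mathcal Q$ maps passive states to (nonnegative multiples of) passive states: for every $\tau\in\mathsf P(S)$, $\mathcal Q(\tau)=c\,\tau'$ for some $c\ge0$ and $\tau'\in\mathsf P(S)$. Moreover, every energy-preserving channel is passivization-covariant.
   Context: $S$ is a $d$-dimensional quantum system with non-degenerate Hamiltonian $H=\sum_i E_i|i\rangle\langle i|$, $E_1<\dots<E_d$. $\mathsf P(S)$ is the set of passive states, i.e. density matrices $\sum_ip_i|i\rangle\langle i|$ with $p_1\ge\dots\ge p_d$. Let $\tau_j=\frac1j\sum_{i=1}^j|i\rangle\langle i|$ and let the canonical passivization be the channel $\Pi(\rho)=\sum_{i=1}^d\langle i|\rho|i\rangle\,\tau_i$. A passivization-covariant operation is a completely positive trace-non-increasing map $\mathcal Q$ with $\mathcal Q\circ\Pi=\Pi\circ\mathcal Q$. An energy-preserving channel is a CPTP map $\mathcal E$ with $\langle i|\mathcal E(\rho)|i\rangle=\langle i|\rho|i\rangle$ for all $\rho$ and $i$. *)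

theory Defs
  imports Complex_Main "Jordan_Normal_Form.Matrix"
begin

text \<open>Operators on the d-dimensional system are complex d x d matrices (carrier_mat d d);
  the energy eigenbasis |1>,...,|d> is the standard basis, indexed 0,...,d-1 (so that
  E_0 < ... < E_(d-1)).\<close>

definition mtrace :: "complex mat \<Rightarrow> complex" where
  "mtrace A = (\<Sum>i<dim_row A. A $$ (i, i))"

definition psd :: "nat \<Rightarrow> complex mat \<Rightarrow> bool" where
  "psd n A \<longleftrightarrow> A \<in> carrier_mat n n \<and>
     (\<forall>v \<in> carrier_vec n.
        let z = (\<Sum>i<n. \<Sum>j<n. cnj (v $ i) * A $$ (i, j) * v $ j) in Im z = 0 \<and> Re z \<ge> 0)"

definition density :: "nat \<Rightarrow> complex mat \<Rightarrow> bool" where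
  "density d \<rho> \<longleftrightarrow> psd d \<rho> \<and> mtrace \<rho> = 1"

definition passive_state :: "nat \<Rightarrow> complex mat \<Rightarrow> bool" where
  "passive_state d \<rho> \<longleftrightarrow> density d \<rho> \<and>
     (\<exists>p :: nat \<Rightarrow> real. \<rho> = mat d d (\<lambda>(i, j). if i = j then complex_of_real (p i) else 0)
        \<and> (\<forall>i j. i \<le> j \<and> j < d \<longrightarrow> p j \<le> p i))"

text \<open>tau_k = 1/(k+1) * sum_{i \<le> k} |i><i|  (0-indexed version of tau_j, j = k+1).\<close>
definition tau :: "nat \<Rightarrow> nat \<Rightarrow> complex mat" where
  "tau d k = mat d d (\<lambda>(i, j). if i = j \<and> i \<le> k then 1 / of_nat (k + 1) else 0)"

definition passivization :: "nat \<Rightarrow> complex mat \<Rightarrow> complex mat" where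
  "passivization d \<rho> = mat d d (\<lambda>(i, j). \<Sum>k<d. \<rho> $$ (k, k) * tau d k $$ (i, j))"

definition lin_map :: "nat \<Rightarrow> (complex mat \<Rightarrow> complex mat) \<Rightarrow> bool" where
  "lin_map d Q \<longleftrightarrow>
     (\<forall>A \<in> carrier_mat d d. Q A \<in> carrier_mat d d) \<and>
     (\<forall>A \<in> carrier_mat d d. \<forall>B \<in> carrier_mat d d. Q (A + B) = Q A + Q B) \<and>
     (\<forall>A \<in> carrier_mat d d. \<forall>c. Q (c \<cdot>\<^sub>m A) = c \<cdot>\<^sub>m Q A)"

text \<open>(id_n \<otimes> Q) acting on an (n d) x (n d) matrix on C^n \<otimes> C^d, with basis
  |a>|i> indexed by a*d+i: each d x d block is mapped by Q.\<close>
definition ampliate :: "nat \<Rightarrow> nat \<Rightarrow> (complex mat \<Rightarrow> complex mat) \<Rightarrow> complex mat \<Rightarrow> complex mat" where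
  "ampliate d n Q M = mat (n * d) (n * d) (\<lambda>(r, c).
      Q (mat d d (\<lambda>(i, j). M $$ ((r div d) * d + i, (c div d) * d + j))) $$ (r mod d, c mod d))"

definition completely_positive :: "nat \<Rightarrow> (complex mat \<Rightarrow> complex mat) \<Rightarrow> bool" where
  "completely_positive d Q \<longleftrightarrow> lin_map d Q \<and>
     (\<forall>n M. psd (n * d) M \<longrightarrow> psd (n * d) (ampliate d n Q M))"

definition operation :: "nat \<Rightarrow> (complex mat \<Rightarrow> complex mat) \<Rightarrow> bool" where
  "operation d Q \<longleftrightarrow> completely_positive d Q \<and>
     (\<forall>\<rho>. psd d \<rho> \<longrightarrow> Re (mtrace (Q \<rho>)) \<le> Re (mtrace \<rho>))"

definition channel :: "nat \<Rightarrow> (complex mat \<Rightarrow> complex mat) \<Rightarrow> bool" where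
  "channel d Q \<longleftrightarrow> completely_positive d Q \<and>
     (\<forall>A \<in> carrier_mat d d. mtrace (Q A) = mtrace A)"

definition passivization_covariant :: "nat \<Rightarrow> (complex mat \<Rightarrow> complex mat) \<Rightarrow> bool" where
  "passivization_covariant d Q \<longleftrightarrow> operation d Q \<and>
     (\<forall>A \<in> carrier_mat d d. Q (passivization d A) = passivization d (Q A))"

definition energy_preserving :: "nat \<Rightarrow> (complex mat \<Rightarrow> complex mat) \<Rightarrow> bool" where
  "energy_preserving d E \<longleftrightarrow> channel d E \<and>
     (\<forall>\<rho> i. density d \<rho> \<and> i < d \<longrightarrow> E \<rho> $$ (i, i) = \<rho> $$ (i, i))"

end

theory Submission
  imports Defs
begin

text \<open>Writing a passive state with eigenvalues \<open>p\<^sub>1 \<ge> \<dots> \<ge> p\<^sub>d\<close>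
  as \<open>\<Sum>\<^sub>k k (p\<^sub>k - p\<^sub>k\<^sub>+\<^sub>1) \<tau>\<^sub>k\<close> exhibits it as \<open>\<Pi>(\<sigma>)\<close>
  for a diagonal positive \<open>\<sigma>\<close>, so covariance gives \<open>\<Q>(\<tau>) = \<Pi>(\<Q>(\<sigma>))\<close>. The
  passivization of any positive matrix is a diagonal matrix with nonnegative, nonincreasing
  entries, i.e. a nonnegative multiple of a passive state.

  An energy-preserving channel keeps every diagonal entry of every matrix, because density
  matrices span all matrices. Positivity then forces it to fix each \<open>|i\<rangle>\<langle>i|\<close>, hence every
  diagonal matrix and in particular \<open>\<Pi>(A)\<close>, while \<open>\<Pi>(\<E>(A)) = \<Pi>(A)\<close> since \<open>\<Pi>\<close> only
  reads the diagonal.\<close>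

lemma sum_two_point:
  fixes g :: "nat \<Rightarrow> complex"
  assumes "j < d" "l < d"
  shows "(\<Sum>t<d. g t * ((if t = j then x else 0) + (if t = l then y else 0))) = g j * x + g l * y"
  using assms by (simp add: distrib_left sum.distrib if_distrib[of "(*) _"] cong: if_cong)

lemma psd_two_point_form:
  assumes "psd d A" "j < d" "l < d"
  shows "Im (cnj x * (A $$ (j, j) * x + A $$ (j, l) * y) + cnj y * (A $$ (l, j) * x + A $$ (l, l) * y)) = 0
       \<and> Re (cnj x * (A $$ (j, j) * x + A $$ (j, l) * y) + cnj y * (A $$ (l, j) * x + A $$ (l, l) * y)) \<ge> 0"
proof -
  define w where "w t = (if t = j then x else 0) + (if t = l then y else 0)" for t
  have "(\<Sum>i<d. \<Sum>t<d. cnj (vec d w $ i) * A $$ (i, t) * vec d w $ t)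
      = (\<Sum>i<d. (A $$ (i, j) * x + A $$ (i, l) * y)
                  * ((if i = j then cnj x else 0) + (if i = l then cnj y else 0)))"
    (is "_ = (\<Sum>i<d. ?r i)")
  proof (rule sum.cong[OF refl])
    fix i assume "i \<in> {..<d}"
    then have "(\<Sum>t<d. cnj (vec d w $ i) * A $$ (i, t) * vec d w $ t)
        = cnj (w i) * (\<Sum>t<d. A $$ (i, t) * w t)"
      by (simp add: sum_distrib_left mult.assoc)
    also have "\<dots> = cnj (w i) * (A $$ (i, j) * x + A $$ (i, l) * y)"
      by (simp only: w_def sum_two_point[OF assms(2,3)])
    also have "\<dots> = ?r i"
      by (simp add: w_def mult.commute[of "cnj _"])
    finally show "(\<Sum>t<d. cnj (vec d w $ i) * A $$ (i, t) * vec d w $ t) = ?r i" .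
  qed
  also have "\<dots> = cnj x * (A $$ (j, j) * x + A $$ (j, l) * y) + cnj y * (A $$ (l, j) * x + A $$ (l, l) * y)"
    (is "_ = ?z")
    using sum_two_point[OF assms(2,3), of "\<lambda>i. A $$ (i, j) * x + A $$ (i, l) * y" "cnj x" "cnj y"]
    by simp
  finally have form: "(\<Sum>i<d. \<Sum>t<d. cnj (vec d w $ i) * A $$ (i, t) * vec d w $ t) = ?z" .
  have "let z = (\<Sum>i<d. \<Sum>t<d. cnj (vec d w $ i) * A $$ (i, t) * vec d w $ t) in Im z = 0 \<and> Re z \<ge> 0"
    using assms(1) vec_carrier unfolding psd_def by blast
  then show ?thesis unfolding form Let_def .
qed

lemma psd_diag_entry:
  assumes "psd d A" "j < d"
  shows "Im (A $$ (j, j)) = 0 \<and> Re (A $$ (j, j)) \<ge> 0"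
  using psd_two_point_form[OF assms assms(2), of 1 0] by simp

lemma nonneg_affine_imp_slope_zero:
  fixes a b :: real
  assumes "\<And>s. 0 \<le> a * s + b"
  shows "a = 0"
proof (rule ccontr)
  assume "a \<noteq> 0"
  then have "a * (- (\<bar>b\<bar> + 1) / a) + b < 0" by simp
  with assms show False by (meson not_le)
qed

lemma psd_zero_diag_entry:
  assumes "psd d A" "j < d" "l < d" "A $$ (j, j) = 0"
  shows "A $$ (j, l) = 0 \<and> A $$ (l, j) = 0"
proof -
  define a b c where "a = A $$ (j, l)" and "b = A $$ (l, j)" and "c = A $$ (l, l)"
  have form: "Im (cnj x * a + b * x + c) = 0 \<and> Re (cnj x * a + b * x + c) \<ge> 0" for x
    using psd_two_point_form[OF assms(1-3), of x 1] assms(4) unfolding a_def b_def c_def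
    by (simp add: algebra_simps)
  \<comment> \<open>Testing the form along the real and the imaginary axis gives four affine functions of a real
    parameter that stay nonnegative, so their slopes vanish.\<close>
  have "Re (a + b) * s + Re c \<ge> 0" "Im (a + b) * s + Im c \<ge> 0"
    "Im (a - b) * s + Re c \<ge> 0" "Re (b - a) * s + Im c \<ge> 0" for s :: real
    using form[of "complex_of_real s"] form[of "\<i> * complex_of_real s"] by (simp_all add: algebra_simps)
  then have "Re (a + b) = 0" "Im (a + b) = 0" "Im (a - b) = 0" "Re (b - a) = 0"
    by (metis nonneg_affine_imp_slope_zero)+
  then show ?thesis unfolding a_def b_def by (simp add: complex_eq_iff)
qed

definition real_diag_mat :: "nat \<Rightarrow> (nat \<Rightarrow> real) \<Rightarrow> complex mat" where
  "real_diag_mat d r = mat d d (\<lambda>(i, j). if i = j then complex_of_real (r i) else 0)"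

lemma real_diag_mat_carrier: "real_diag_mat d r \<in> carrier_mat d d"
  unfolding real_diag_mat_def by simp

lemma mtrace_real_diag_mat: "mtrace (real_diag_mat d r) = complex_of_real (\<Sum>i<d. r i)"
  unfolding mtrace_def real_diag_mat_def by simp

lemma psd_real_diag_mat:
  assumes "\<And>i. i < d \<Longrightarrow> r i \<ge> 0"
  shows "psd d (real_diag_mat d r)"
  unfolding psd_def
proof (intro conjI ballI)
  show "real_diag_mat d r \<in> carrier_mat d d" by (rule real_diag_mat_carrier)
  fix v :: "complex vec"
  have "(\<Sum>i<d. \<Sum>j<d. cnj (v $ i) * real_diag_mat d r $$ (i, j) * v $ j)
      = (\<Sum>i<d. complex_of_real (r i * (cmod (v $ i))\<^sup>2))"
  proof (rule sum.cong[OF refl])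
    fix i assume i: "i \<in> {..<d}"
    have "(\<Sum>j<d. cnj (v $ i) * real_diag_mat d r $$ (i, j) * v $ j)
        = complex_of_real (r i) * (v $ i * cnj (v $ i))"
      using i by (simp add: real_diag_mat_def if_distrib[of "\<lambda>z. _ * z * _"] cong: if_cong)
    then show "(\<Sum>j<d. cnj (v $ i) * real_diag_mat d r $$ (i, j) * v $ j)
        = complex_of_real (r i * (cmod (v $ i))\<^sup>2)"
      by (simp add: complex_norm_square[symmetric])
  qed
  moreover have "0 \<le> (\<Sum>i<d. r i * (cmod (v $ i))\<^sup>2)" by (intro sum_nonneg) (simp add: assms)
  ultimately show "let z = (\<Sum>i<d. \<Sum>j<d. cnj (v $ i) * real_diag_mat d r $$ (i, j) * v $ j)
      in Im z = 0 \<and> Re z \<ge> 0"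
    by (simp add: Let_def flip: of_real_sum)
qed

lemma passive_state_real_diag_mat:
  assumes "\<And>i. i < d \<Longrightarrow> r i \<ge> 0" "(\<Sum>i<d. r i) = 1"
    and "\<And>i j. i \<le> j \<Longrightarrow> j < d \<Longrightarrow> r j \<le> r i"
  shows "passive_state d (real_diag_mat d r)"
  unfolding passive_state_def density_def
  using psd_real_diag_mat[of d r] assms mtrace_real_diag_mat[of d r] by (auto simp: real_diag_mat_def)

definition outer :: "nat \<Rightarrow> (nat \<Rightarrow> complex) \<Rightarrow> complex mat" where
  "outer d u = mat d d (\<lambda>(i, j). u i * cnj (u j))"

lemma outer_carrier: "outer d u \<in> carrier_mat d d"
  unfolding outer_def by simp

lemma mtrace_outer: "mtrace (outer d u) = complex_of_real (\<Sum>i<d. (cmod (u i))\<^sup>2)"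
  unfolding mtrace_def outer_def by (simp add: complex_norm_square[symmetric])

lemma psd_scaled_outer:
  assumes "c \<ge> 0"
  shows "psd d (complex_of_real c \<cdot>\<^sub>m outer d u)"
  unfolding psd_def
proof (intro conjI ballI)
  show "complex_of_real c \<cdot>\<^sub>m outer d u \<in> carrier_mat d d" unfolding outer_def by simp
  fix v :: "complex vec"
  define w where "w = (\<Sum>i<d. cnj (v $ i) * u i)"
  have "(\<Sum>i<d. \<Sum>j<d. cnj (v $ i) * (complex_of_real c \<cdot>\<^sub>m outer d u) $$ (i, j) * v $ j)
      = complex_of_real c * (\<Sum>i<d. \<Sum>j<d. (cnj (v $ i) * u i) * cnj (cnj (v $ j) * u j))"
    by (simp add: sum_distrib_left outer_def algebra_simps)
  also have "\<dots> = complex_of_real c * (w * cnj w)"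
    unfolding w_def by (simp only: sum_product cnj_sum)
  also have "\<dots> = complex_of_real (c * (cmod w)\<^sup>2)"
    by (simp add: complex_norm_square[symmetric])
  finally show "let z = (\<Sum>i<d. \<Sum>j<d. cnj (v $ i) * (complex_of_real c \<cdot>\<^sub>m outer d u) $$ (i, j) * v $ j)
      in Im z = 0 \<and> Re z \<ge> 0"
    using assms by (simp add: Let_def)
qed

lemma density_normalized_outer:
  assumes "(\<Sum>i<d. (cmod (u i))\<^sup>2) = s" "s \<noteq> 0"
  shows "density d (complex_of_real (1 / s) \<cdot>\<^sub>m outer d u)"
proof -
  have "s > 0" using assms by (metis sum_nonneg zero_le_power2 order_le_less)
  moreover have "mtrace (complex_of_real (1 / s) \<cdot>\<^sub>m outer d u) = complex_of_real (1 / s) * mtrace (outer d u)"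
    unfolding mtrace_def outer_def by (simp add: sum_distrib_left)
  ultimately show ?thesis
    unfolding density_def using psd_scaled_outer[of "1 / s" d u] assms by (simp add: mtrace_outer)
qed

definition mat_unit :: "nat \<Rightarrow> nat \<Rightarrow> nat \<Rightarrow> complex mat" where
  "mat_unit d i j = mat d d (\<lambda>(r, c). if r = i \<and> c = j then 1 else 0)"

lemma mat_unit_carrier: "mat_unit d i j \<in> carrier_mat d d"
  unfolding mat_unit_def by simp

definition polar_vec :: "nat \<Rightarrow> nat \<Rightarrow> complex \<Rightarrow> nat \<Rightarrow> complex" where
  "polar_vec i j a t = (if t = i then 1 else 0) + (if t = j then a else 0)"

lemma mat_unit_polarization:
  assumes "i < d" "j < d"
  shows "mat_unit d i j = (((1/4) \<cdot>\<^sub>m outer d (polar_vec i j 1) + (\<i>/4) \<cdot>\<^sub>m outer d (polar_vec i j \<i>))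
           + (-1/4) \<cdot>\<^sub>m outer d (polar_vec i j (-1))) + (-\<i>/4) \<cdot>\<^sub>m outer d (polar_vec i j (-\<i>))"
  by (intro eq_matI) (auto simp: mat_unit_def outer_def polar_vec_def algebra_simps complex_eq_iff)

definition restrict_entries :: "nat \<Rightarrow> complex mat \<Rightarrow> (nat \<times> nat) set \<Rightarrow> complex mat" where
  "restrict_entries d A S = mat d d (\<lambda>(r, c). if (r, c) \<in> S then A $$ (r, c) else 0)"

lemma linear_functional_zero_on_units:
  fixes F :: "complex mat \<Rightarrow> complex"
  assumes add: "\<And>A B. A \<in> carrier_mat d d \<Longrightarrow> B \<in> carrier_mat d d \<Longrightarrow> F (A + B) = F A + F B"
    and hom: "\<And>A c. A \<in> carrier_mat d d \<Longrightarrow> F (c \<cdot>\<^sub>m A) = c * F A"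
    and units: "\<And>i j. i < d \<Longrightarrow> j < d \<Longrightarrow> F (mat_unit d i j) = 0"
    and A: "A \<in> carrier_mat d d"
  shows "F A = 0"
proof -
  have "F (restrict_entries d A S) = 0" if "finite S" "S \<subseteq> {..<d} \<times> {..<d}" for S
    using that
  proof (induction S rule: finite_induct)
    case empty
    have "restrict_entries d A {} = 0 \<cdot>\<^sub>m A" using A by (intro eq_matI) (auto simp: restrict_entries_def)
    then show ?case using hom[OF A, of 0] by simp
  next
    case (insert p S)
    obtain i j where p: "p = (i, j)" and ij: "i < d" "j < d" using insert(4) by fastforce
    have "restrict_entries d A (insert p S) = restrict_entries d A S + A $$ (i, j) \<cdot>\<^sub>m mat_unit d i j"
      using insert(2) p by (intro eq_matI) (auto simp: restrict_entries_def mat_unit_def)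
    then show ?case
      using add hom units[OF ij] insert mat_unit_carrier by (simp add: restrict_entries_def)
  qed
  moreover have "restrict_entries d A ({..<d} \<times> {..<d}) = A"
    using A by (intro eq_matI) (auto simp: restrict_entries_def)
  ultimately show ?thesis by (metis finite_SigmaI finite_lessThan order_refl)
qed

lemma ampliate_one:
  assumes "lin_map d Q" "M \<in> carrier_mat d d"
  shows "ampliate d 1 Q M = Q M"
proof -
  have "Q M \<in> carrier_mat d d" using assms unfolding lin_map_def by blast
  moreover have "mat d d (\<lambda>(i, j). M $$ (0 * d + i, 0 * d + j)) = M"
    using assms(2) by (intro eq_matI) auto
  ultimately show ?thesis unfolding ampliate_def by (intro eq_matI) auto
qed

lemma completely_positive_imp_psd:
  assumes "completely_positive d Q" "psd d M"
  shows "psd d (Q M)"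
proof -
  have "psd (1 * d) M \<longrightarrow> psd (1 * d) (ampliate d 1 Q M)"
    using assms(1) unfolding completely_positive_def by blast
  then have "psd (1 * d) (ampliate d 1 Q M)"
    using assms(2) by (simp only: mult_1)
  moreover have "M \<in> carrier_mat d d" using assms(2) unfolding psd_def by simp
  ultimately show ?thesis
    using ampliate_one assms(1) unfolding completely_positive_def by (simp only: mult_1)
qed

lemma lin_map_closed: "lin_map d Q \<Longrightarrow> A \<in> carrier_mat d d \<Longrightarrow> Q A \<in> carrier_mat d d"
  unfolding lin_map_def by blast

lemma lin_map_add:
  "lin_map d Q \<Longrightarrow> A \<in> carrier_mat d d \<Longrightarrow> B \<in> carrier_mat d d \<Longrightarrow> Q (A + B) = Q A + Q B"
  unfolding lin_map_def by blast

lemma lin_map_smult: "lin_map d Q \<Longrightarrow> A \<in> carrier_mat d d \<Longrightarrow> Q (c \<cdot>\<^sub>m A) = c \<cdot>\<^sub>m Q A"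
  unfolding lin_map_def by blast

lemma lin_map_zero:
  assumes "lin_map d Q"
  shows "Q (0\<^sub>m d d) = 0\<^sub>m d d"
proof -
  have "Q (0\<^sub>m d d) = Q ((0::complex) \<cdot>\<^sub>m 0\<^sub>m d d)" by (simp add: smult_zero_mat)
  also have "\<dots> = 0 \<cdot>\<^sub>m Q (0\<^sub>m d d)" using lin_map_smult[OF assms zero_carrier_mat] .
  also have "\<dots> = 0\<^sub>m d d" using lin_map_closed[OF assms zero_carrier_mat] by (intro eq_matI) auto
  finally show ?thesis .
qed

lemma linear_functional_zero_on_densities:
  fixes F :: "complex mat \<Rightarrow> complex"
  assumes add: "\<And>A B. A \<in> carrier_mat d d \<Longrightarrow> B \<in> carrier_mat d d \<Longrightarrow> F (A + B) = F A + F B"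
    and hom: "\<And>A c. A \<in> carrier_mat d d \<Longrightarrow> F (c \<cdot>\<^sub>m A) = c * F A"
    and densities: "\<And>\<rho>. density d \<rho> \<Longrightarrow> F \<rho> = 0"
    and A: "A \<in> carrier_mat d d"
  shows "F A = 0"
proof (rule linear_functional_zero_on_units[OF add hom _ A])
  have outer: "F (outer d u) = 0" for u
  proof (cases "(\<Sum>i<d. (cmod (u i))\<^sup>2) = 0")
    case True
    then have "outer d u = 0 \<cdot>\<^sub>m outer d u"
      by (intro eq_matI) (auto simp: outer_def sum_nonneg_eq_0_iff)
    then show ?thesis using hom[OF outer_carrier, of 0] by (metis mult_zero_left)
  next
    case False
    define s where "s = (\<Sum>i<d. (cmod (u i))\<^sup>2)"
    have "s \<noteq> 0" using False unfolding s_def .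
    then have "outer d u = complex_of_real s \<cdot>\<^sub>m (complex_of_real (1 / s) \<cdot>\<^sub>m outer d u)"
      by (intro eq_matI) (auto simp: outer_def)
    then show ?thesis
      using densities[OF density_normalized_outer[OF s_def[symmetric]]] False hom outer_carrier
      unfolding s_def by (metis mult_zero_right smult_carrier_mat)
  qed
  fix i j assume "i < d" "j < d"
  then show "F (mat_unit d i j) = 0"
    unfolding mat_unit_polarization[OF \<open>i < d\<close> \<open>j < d\<close>]
    by (simp add: add hom outer outer_carrier)
qed

lemma energy_preserving_lin_map: "energy_preserving d E \<Longrightarrow> lin_map d E"
  unfolding energy_preserving_def channel_def completely_positive_def by blast

lemma energy_preserving_diag_entry:
  assumes ep: "energy_preserving d E" and A: "A \<in> carrier_mat d d" and k: "k < d"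
  shows "E A $$ (k, k) = A $$ (k, k)"
proof -
  note lin = energy_preserving_lin_map[OF ep]
  have "E A $$ (k, k) - A $$ (k, k) = 0"
  proof (rule linear_functional_zero_on_densities[OF _ _ _ A])
    fix B C :: "complex mat" and c :: complex
    assume B: "B \<in> carrier_mat d d" and C: "C \<in> carrier_mat d d"
    then show "E (B + C) $$ (k, k) - (B + C) $$ (k, k) = E B $$ (k, k) - B $$ (k, k) + (E C $$ (k, k) - C $$ (k, k))"
      "E (c \<cdot>\<^sub>m B) $$ (k, k) - (c \<cdot>\<^sub>m B) $$ (k, k) = c * (E B $$ (k, k) - B $$ (k, k))"
      using k lin_map_closed[OF lin B] lin_map_closed[OF lin C]
      by (simp_all add: lin_map_add[OF lin B C] lin_map_smult[OF lin B] algebra_simps)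
  next
    fix \<rho> assume "density d \<rho>"
    then show "E \<rho> $$ (k, k) - \<rho> $$ (k, k) = 0" using ep k unfolding energy_preserving_def by simp
  qed
  then show ?thesis by simp
qed

lemma energy_preserving_completely_positive: "energy_preserving d E \<Longrightarrow> completely_positive d E"
  unfolding energy_preserving_def channel_def by blast

lemma energy_preserving_fixes_diag_unit:
  assumes ep: "energy_preserving d E" and i: "i < d"
  shows "E (mat_unit d i i) = mat_unit d i i"
proof -
  have "mat_unit d i i = complex_of_real 1 \<cdot>\<^sub>m outer d (\<lambda>t. if t = i then 1 else 0)"
    by (intro eq_matI) (auto simp: mat_unit_def outer_def)
  then have "psd d (mat_unit d i i)" using psd_scaled_outer[of 1 d] by simp
  then have psd: "psd d (E (mat_unit d i i))"
    using completely_positive_imp_psd[OF energy_preserving_completely_positive[OF ep]] by blast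
  have diag: "E (mat_unit d i i) $$ (r, r) = (if r = i then 1 else 0)" if "r < d" for r
    using energy_preserving_diag_entry[OF ep mat_unit_carrier that] that by (simp add: mat_unit_def)
  have off_diag: "E (mat_unit d i i) $$ (r, c) = 0" if "r < d" "c < d" "r \<noteq> i \<or> c \<noteq> i" for r c
    using that psd_zero_diag_entry[OF psd, of r c] psd_zero_diag_entry[OF psd, of c r] diag by auto
  show ?thesis
    using diag off_diag carrier_matD[OF lin_map_closed[OF energy_preserving_lin_map[OF ep] mat_unit_carrier]]
    by (intro eq_matI) (auto simp: mat_unit_def)
qed

definition diag_part :: "nat \<Rightarrow> complex mat \<Rightarrow> complex mat" where
  "diag_part d A = mat d d (\<lambda>(i, j). if i = j then A $$ (i, i) else 0)"

lemma energy_preserving_fixes_diag_part: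
  assumes ep: "energy_preserving d E" and A: "A \<in> carrier_mat d d"
  shows "E (diag_part d A) = diag_part d A"
proof -
  note lin = energy_preserving_lin_map[OF ep]
  have dc: "diag_part d B \<in> carrier_mat d d" for B unfolding diag_part_def by simp
  have dim: "dim_row (E (diag_part d B)) = d" "dim_col (E (diag_part d B)) = d"
    "dim_row (diag_part d B) = d" "dim_col (diag_part d B) = d" for B
    using lin_map_closed[OF lin dc] dc by auto
  have entry: "E (diag_part d A) $$ (r, c) - diag_part d A $$ (r, c) = 0" if rc: "r < d" "c < d" for r c
  proof (rule linear_functional_zero_on_units[OF _ _ _ A])
    fix B C :: "complex mat" and a :: complex
    assume B: "B \<in> carrier_mat d d" and C: "C \<in> carrier_mat d d"
    have split: "diag_part d (B + C) = diag_part d B + diag_part d C"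
      "diag_part d (a \<cdot>\<^sub>m B) = a \<cdot>\<^sub>m diag_part d B"
      using B C by (auto intro!: eq_matI simp: diag_part_def)
    show "E (diag_part d (B + C)) $$ (r, c) - diag_part d (B + C) $$ (r, c)
        = E (diag_part d B) $$ (r, c) - diag_part d B $$ (r, c) + (E (diag_part d C) $$ (r, c) - diag_part d C $$ (r, c))"
      "E (diag_part d (a \<cdot>\<^sub>m B)) $$ (r, c) - diag_part d (a \<cdot>\<^sub>m B) $$ (r, c)
        = a * (E (diag_part d B) $$ (r, c) - diag_part d B $$ (r, c))"
      unfolding split lin_map_add[OF lin dc dc] lin_map_smult[OF lin dc]
      using rc by (simp_all add: dim algebra_simps)
  next
    fix i j assume ij: "i < d" "j < d"
    show "E (diag_part d (mat_unit d i j)) $$ (r, c) - diag_part d (mat_unit d i j) $$ (r, c) = 0"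
    proof (cases "i = j")
      case True
      then have "diag_part d (mat_unit d i j) = mat_unit d i i"
        by (intro eq_matI) (auto simp: diag_part_def mat_unit_def)
      then show ?thesis using energy_preserving_fixes_diag_unit[OF ep ij(1)] by simp
    next
      case False
      then have "diag_part d (mat_unit d i j) = 0\<^sub>m d d"
        by (intro eq_matI) (auto simp: diag_part_def mat_unit_def)
      then show ?thesis using lin_map_zero[OF lin] by simp
    qed
  qed
  show ?thesis
    using entry dim by (intro eq_matI) (auto simp: diag_part_def)
qed

lemma diag_part_passivization: "diag_part d (passivization d A) = passivization d A"
  by (intro eq_matI) (auto simp: diag_part_def passivization_def tau_def)

lemma energy_preserving_imp_passivization_covariant:
  assumes ep: "energy_preserving d E"
  shows "passivization_covariant d E"
  unfolding passivization_covariant_def operation_def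
proof (intro conjI allI impI ballI)
  show "completely_positive d E" using energy_preserving_completely_positive[OF ep] .
  fix \<rho> assume "psd d \<rho>"
  then show "Re (mtrace (E \<rho>)) \<le> Re (mtrace \<rho>)"
    using ep unfolding psd_def energy_preserving_def channel_def by simp
next
  fix A :: "complex mat" assume A: "A \<in> carrier_mat d d"
  have "passivization d (E A) = passivization d A"
    unfolding passivization_def
    by (intro eq_matI) (auto simp: energy_preserving_diag_entry[OF ep A] intro!: sum.cong)
  moreover have "E (passivization d A) = passivization d A"
    using energy_preserving_fixes_diag_part[OF ep, of "passivization d A"] diag_part_passivization
    by (simp add: passivization_def)
  ultimately show "E (passivization d A) = passivization d (E A)" by simp
qed

lemma real_diag_mat_cong: "(\<And>i. i < d \<Longrightarrow> r i = r' i) \<Longrightarrow> real_diag_mat d r = real_diag_mat d r'"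
  unfolding real_diag_mat_def by (intro eq_matI) auto

lemma passive_stateE:
  assumes "passive_state d \<tau>"
  obtains p where "\<tau> = real_diag_mat d p" "\<And>i. i < d \<Longrightarrow> 0 \<le> p i"
    "\<And>i j. i \<le> j \<Longrightarrow> j < d \<Longrightarrow> p j \<le> p i"
proof -
  obtain p where \<tau>: "\<tau> = real_diag_mat d p" and mono: "\<And>i j. i \<le> j \<Longrightarrow> j < d \<Longrightarrow> p j \<le> p i"
    using assms unfolding passive_state_def real_diag_mat_def by blast
  have "psd d \<tau>" using assms unfolding passive_state_def density_def by blast
  then have last: "0 \<le> p (d - 1)" if "0 < d"
    using psd_diag_entry[of d \<tau> "d - 1"] that unfolding \<tau> real_diag_mat_def by simp
  have "0 \<le> p i" if "i < d" for i
  proof -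
    have "p (d - 1) \<le> p i" using mono[of i "d - 1"] that by simp
    then show ?thesis using last that by simp
  qed
  from \<tau> this mono show thesis by (rule that)
qed

lemma passive_state_dim_pos: "passive_state d \<tau> \<Longrightarrow> 0 < d"
  by (cases "d = 0") (auto simp: passive_state_def density_def psd_def mtrace_def)

lemma passivization_real_diag:
  assumes "\<And>k. k < d \<Longrightarrow> B $$ (k, k) = complex_of_real (w k)"
  shows "passivization d B = real_diag_mat d (\<lambda>i. \<Sum>k = i..<d. w k / real (k + 1))" (is "_ = ?D")
proof (rule eq_matI)
  fix i j assume "i < dim_row ?D" "j < dim_col ?D"
  then have ij: "i < d" "j < d" by (simp_all add: real_diag_mat_def)
  have "{k \<in> {..<d}. i \<le> k} = {i..<d}" by auto
  then have tail: "(\<Sum>k<d. if i \<le> k then w k / real (k + 1) else 0) = (\<Sum>k = i..<d. w k / real (k + 1))"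
    by (metis (no_types) finite_lessThan sum.inter_filter)
  have "passivization d B $$ (i, j) = (\<Sum>k<d. complex_of_real (w k) * tau d k $$ (i, j))"
    using ij assms by (auto simp: passivization_def intro!: sum.cong)
  also have "\<dots> = (if i = j then complex_of_real (\<Sum>k<d. if i \<le> k then w k / real (k + 1) else 0) else 0)"
    using ij by (auto simp: tau_def of_real_sum intro!: sum.cong)
  also have "\<dots> = ?D $$ (i, j)"
    unfolding tail using ij by (simp add: real_diag_mat_def)
  finally show "passivization d B $$ (i, j) = ?D $$ (i, j)" .
qed (simp_all add: passivization_def real_diag_mat_def)

lemma passive_state_passivization_preimage:
  assumes "passive_state d \<tau>"
  obtains \<sigma> where "\<sigma> \<in> carrier_mat d d" "psd d \<sigma>" "passivization d \<sigma> = \<tau>"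
proof -
  obtain p where \<tau>: "\<tau> = real_diag_mat d p" and nonneg: "\<And>i. i < d \<Longrightarrow> 0 \<le> p i"
    and mono: "\<And>i j. i \<le> j \<Longrightarrow> j < d \<Longrightarrow> p j \<le> p i"
    using passive_stateE[OF assms] by blast
  define p' where "p' k = (if k < d then p k else 0)" for k
  define q where "q k = real (k + 1) * (p' k - p' (Suc k))" for k
  have "q k \<ge> 0" if "k < d" for k
    using that mono[of k "Suc k"] nonneg[of k] unfolding q_def p'_def by auto
  then have "psd d (real_diag_mat d q)" by (rule psd_real_diag_mat)
  moreover have "passivization d (real_diag_mat d q) = real_diag_mat d (\<lambda>i. \<Sum>k = i..<d. q k / real (k + 1))"
    by (rule passivization_real_diag) (simp add: real_diag_mat_def)
  moreover have "real_diag_mat d (\<lambda>i. \<Sum>k = i..<d. q k / real (k + 1)) = \<tau>"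
    unfolding \<tau> q_def using sum_Suc_diff'[of _ d "\<lambda>k. - p' k"]
    by (intro real_diag_mat_cong) (simp add: p'_def)
  ultimately show thesis using real_diag_mat_carrier that by metis
qed

lemma psd_passivization_scaled_passive:
  assumes "0 < d" "psd d B"
  shows "\<exists>c :: real. \<exists>\<tau>. c \<ge> 0 \<and> passive_state d \<tau> \<and> passivization d B = complex_of_real c \<cdot>\<^sub>m \<tau>"
proof -
  define w where "w k = Re (B $$ (k, k))" for k
  define r where "r i = (\<Sum>k = i..<d. w k / real (k + 1))" for i
  have w: "w k \<ge> 0" "B $$ (k, k) = complex_of_real (w k)" if "k < d" for k
    using psd_diag_entry[OF assms(2) that] unfolding w_def by (simp_all add: complex_eq_iff)
  have PB: "passivization d B = real_diag_mat d r"
    unfolding r_def by (rule passivization_real_diag) (rule w(2))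
  have r_nonneg: "r i \<ge> 0" for i
    unfolding r_def by (intro sum_nonneg) (simp add: w)
  have r_mono: "r j \<le> r i" if "i \<le> j" for i j
    unfolding r_def using that by (intro sum_mono2) (auto simp: w)
  define c where "c = (\<Sum>i<d. r i)"
  show ?thesis
  proof (cases "c = 0")
    case True
    \<comment> \<open>Then \<open>\<Pi>(B) = 0\<close>, and any passive state, e.g. the ground state, serves as \<open>\<tau>\<close>.\<close>
    then have "r i = 0" if "i < d" for i
      using sum_nonneg_eq_0_iff[of "{..<d}" r] r_nonneg that unfolding c_def by simp
    then have "passivization d B = complex_of_real 0 \<cdot>\<^sub>m real_diag_mat d (\<lambda>k. if k = 0 then 1 else 0)"
      unfolding PB by (intro eq_matI) (auto simp: real_diag_mat_def)
    moreover have "passive_state d (real_diag_mat d (\<lambda>k. if k = 0 then 1 else 0))"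
      by (rule passive_state_real_diag_mat) (use assms(1) in auto)
    ultimately show ?thesis by blast
  next
    case False
    then have "c > 0" unfolding c_def using r_nonneg by (simp add: order_less_le sum_nonneg)
    have "passive_state d (real_diag_mat d (\<lambda>i. r i / c))"
    proof (rule passive_state_real_diag_mat)
      show "(\<Sum>i<d. r i / c) = 1" using \<open>c > 0\<close> unfolding c_def by (simp add: sum_divide_distrib[symmetric])
    qed (use \<open>c > 0\<close> r_nonneg r_mono in \<open>auto intro: divide_right_mono\<close>)
    moreover have "passivization d B = complex_of_real c \<cdot>\<^sub>m real_diag_mat d (\<lambda>i. r i / c)"
      unfolding PB using \<open>c > 0\<close> by (intro eq_matI) (auto simp: real_diag_mat_def)
    ultimately show ?thesis using \<open>c > 0\<close> by (intro exI[of _ c]) auto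
  qed
qed

lemma passivization_covariant_maps_passive:
  assumes Q: "passivization_covariant d Q" and \<tau>: "passive_state d \<tau>"
  shows "\<exists>c :: real. \<exists>\<tau>'. c \<ge> 0 \<and> passive_state d \<tau>' \<and> Q \<tau> = complex_of_real c \<cdot>\<^sub>m \<tau>'"
proof -
  obtain \<sigma> where \<sigma>: "\<sigma> \<in> carrier_mat d d" "psd d \<sigma>" and \<tau>_eq: "passivization d \<sigma> = \<tau>"
    using \<tau> by (rule passive_state_passivization_preimage)
  have "Q \<tau> = passivization d (Q \<sigma>)"
    using Q \<sigma>(1) unfolding \<tau>_eq[symmetric] passivization_covariant_def by blast
  moreover have "psd d (Q \<sigma>)"
    using Q \<sigma>(2) completely_positive_imp_psd unfolding passivization_covariant_def operation_def by blast
  ultimately show ?thesis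
    using psd_passivization_scaled_passive[OF passive_state_dim_pos[OF \<tau>]] by simp
qed

theorem mainTheorem19:
  fixes d :: nat
  shows "(\<forall>Q. passivization_covariant d Q \<longrightarrow>
            (\<forall>\<tau>. passive_state d \<tau> \<longrightarrow>
               (\<exists>c :: real. \<exists>\<tau>'. c \<ge> 0 \<and> passive_state d \<tau>' \<and> Q \<tau> = complex_of_real c \<cdot>\<^sub>m \<tau>')))
       \<and> (\<forall>E. energy_preserving d E \<longrightarrow> passivization_covariant d E)"
  using passivization_covariant_maps_passive energy_preserving_imp_passivization_covariant by blast

end
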